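(* Let $\mathcal{A}=(\{1,\dots,k\},\sqsubseteq,<)$ be a finite linearly ordered poset where $<$ is the usual order of integers. Let $D_1,\dots,D_m$ be all the nonempty downsets of $(\{1,\dots,k\},\sqsubseteq)$, enumerated so that $D_1<_{\mathit{alex}}D_2<_{\mathit{alex}}\dots<_{\mathit{alex}}D_m$. Let $n\ge m$ and let $u\in W^n_m(\{0\})$ be an $m$-parameter word of length $n$ over the alphabet $\{0\}$; put $X_\alpha=u^{-1}(x_\alpha)$ for $1\le\alpha\le m$, and $a_i=\bigcup\{X_\alpha: i\in D_\alpha\}$ for $1\le i\le k$. Then the map $i\mapsto a_i$ is an embedding of $\mathcal{A}$ into the linearly ordered poset $(\mathcal{P}(\{1,\dots,n\}),\supseteq,<_{\overline{\mathit{lex}}})$; that is, it is injective, $i\sqsubseteq j\iff a_i\supseteq a_j$, and $i<j\iff a_i<_{\overline{\mathit{lex}}}a_j$.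
   Context: A downset in $(A,\sqsubseteq)$ is a set $B\subseteq A$ such that $x\in B$, $y\sqsubseteq x$ imply $y\in B$. For a finite linearly ordered set $(L,<)$ and $A,B\subseteq L$: $A<_{\mathit{alex}}B$ iff $A\subsetneq B$, or $A,B$ are $\subseteq$-incomparable and $\max(A\setminus B)<\max(B\setminus A)$; $A<_{\overline{\mathit{lex}}}B$ iff $A\supsetneq B$, or $A,B$ are incomparable and $\min(A\setminus B)<\min(B\setminus A)$. Both are linear orders on $\mathcal{P}(L)$. With variables $x_1,x_2,\dots$ disjoint from a finite alphabet $A$, an $m$-parameter word of length $n$ over $A$ is a word $w\in(A\cup\{x_1,\dots,x_m\})^n$, viewed as a map $w:\{1,\dots,n\}\to A\cup\{x_1,\dots,x_m\}$, such that each $x_1,\dots,x_m$ occurs in $w$ and $\min w^{-1}(x_i)<\min w^{-1}(x_j)$ for $1\le i<j\le m$; $W^n_m(A)$ is the set of such words. A linearly ordered poset is $(A,\sqsubseteq,<)$ with $(A,\sqsubseteq)$ a poset and $<$ a linear order extending $\sqsubseteq$; an embedding is an injection preserving and reflecting both $\sqsubseteq$ and $<$. *)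

theory Defs
  imports Main
begin

datatype 'a pletter = Let 'a | Var nat

text \<open>Positions of a word w (a list of length n) are 1..n; position i holds w ! (i - 1).
  The set of m-parameter words of length n over alphabet A.\<close>
definition param_words :: "'a set \<Rightarrow> nat \<Rightarrow> nat \<Rightarrow> 'a pletter list set" where
  "param_words A n m = {w. length w = n
     \<and> (\<forall>i\<in>{1..n}. w ! (i - 1) \<in> Let ` A \<union> Var ` {1..m})
     \<and> (\<forall>\<alpha>\<in>{1..m}. \<exists>i\<in>{1..n}. w ! (i - 1) = Var \<alpha>)
     \<and> (\<forall>\<alpha> \<beta>. 1 \<le> \<alpha> \<and> \<alpha> < \<beta> \<and> \<beta> \<le> m \<longrightarrow>
          Min {i\<in>{1..n}. w ! (i - 1) = Var \<alpha>} < Min {i\<in>{1..n}. w ! (i - 1) = Var \<beta>})}"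

definition var_positions :: "'a pletter list \<Rightarrow> nat \<Rightarrow> nat set" where
  "var_positions w \<alpha> = {i\<in>{1..length w}. w ! (i - 1) = Var \<alpha>}"

definition alex_less :: "nat set \<Rightarrow> nat set \<Rightarrow> bool" where
  "alex_less A B \<longleftrightarrow> A \<subset> B \<or>
     (\<not> A \<subseteq> B \<and> \<not> B \<subseteq> A \<and> Max (A - B) < Max (B - A))"

definition colex_bar_less :: "nat set \<Rightarrow> nat set \<Rightarrow> bool" where
  "colex_bar_less A B \<longleftrightarrow> A \<supset> B \<or>
     (\<not> A \<subseteq> B \<and> \<not> B \<subseteq> A \<and> Min (A - B) < Min (B - A))"

definition poset_on :: "'a set \<Rightarrow> ('a \<Rightarrow> 'a \<Rightarrow> bool) \<Rightarrow> bool" where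
  "poset_on S le \<longleftrightarrow> (\<forall>x\<in>S. le x x)
     \<and> (\<forall>x\<in>S. \<forall>y\<in>S. le x y \<and> le y x \<longrightarrow> x = y)
     \<and> (\<forall>x\<in>S. \<forall>y\<in>S. \<forall>z\<in>S. le x y \<and> le y z \<longrightarrow> le x z)"

definition downset :: "'a set \<Rightarrow> ('a \<Rightarrow> 'a \<Rightarrow> bool) \<Rightarrow> 'a set \<Rightarrow> bool" where
  "downset S le B \<longleftrightarrow> B \<subseteq> S \<and> (\<forall>x\<in>B. \<forall>y\<in>S. le y x \<longrightarrow> y \<in> B)"

end

theory Submission
  imports Defs
begin

text \<open>Let \<open>occ i\<close> be the set of indices \<open>\<alpha>\<close> with \<open>i \<in> D \<alpha>\<close>, so that \<open>a i\<close> is the union of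
  the blocks \<open>X \<alpha>\<close> over \<open>\<alpha> \<in> occ i\<close>. Since the blocks are nonempty, disjoint and have
  increasing minima, taking this union preserves and reflects both inclusion and
  \<open>colex_bar_less\<close>, so it suffices to prove the theorem for \<open>occ\<close>. Inclusion: \<open>occ j \<subseteq> occ i\<close>
  iff \<open>i\<close> lies in every downset containing \<open>j\<close>, in particular in the principal one.
  Order: for incomparable \<open>i < j\<close>, let \<open>D \<beta>\<close> be the first downset containing \<open>j\<close> but not \<open>i\<close>.
  Removing the up-set of \<open>j\<close> from \<open>D \<beta>\<close> and adding the down-set of \<open>i\<close> gives a downset that
  is \<open>alex_less\<close>-smaller than \<open>D \<beta>\<close>, contains \<open>i\<close> and not \<open>j\<close>; hence the first downset
  separating \<open>i\<close> from \<open>j\<close> contains \<open>i\<close>.\<close>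

lemma alex_less_irrefl: "\<not> alex_less A A"
  unfolding alex_less_def by auto

lemma alex_less_asym: "alex_less A B \<Longrightarrow> \<not> alex_less B A"
  unfolding alex_less_def by auto

lemma colex_bar_less_irrefl: "\<not> colex_bar_less A A"
  unfolding colex_bar_less_def by auto

lemma colex_bar_less_asym: "colex_bar_less A B \<Longrightarrow> \<not> colex_bar_less B A"
  unfolding colex_bar_less_def by auto

locale ordered_blocks =
  fixes I :: "nat set" and X :: "nat \<Rightarrow> nat set"
  assumes finite_index: "finite I"
    and finite_block: "\<alpha> \<in> I \<Longrightarrow> finite (X \<alpha>)"
    and block_nonempty: "\<alpha> \<in> I \<Longrightarrow> X \<alpha> \<noteq> {}"
    and blocks_disjoint: "\<alpha> \<in> I \<Longrightarrow> \<beta> \<in> I \<Longrightarrow> \<alpha> \<noteq> \<beta> \<Longrightarrow> X \<alpha> \<inter> X \<beta> = {}"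
    and Min_block_less: "\<alpha> \<in> I \<Longrightarrow> \<beta> \<in> I \<Longrightarrow> \<alpha> < \<beta> \<Longrightarrow> Min (X \<alpha>) < Min (X \<beta>)"
begin

lemma Min_block_less_iff:
  assumes "\<alpha> \<in> I" "\<beta> \<in> I"
  shows "Min (X \<alpha>) < Min (X \<beta>) \<longleftrightarrow> \<alpha> < \<beta>"
  using Min_block_less[OF assms] Min_block_less[OF assms(2,1)]
  by (metis less_asym linorder_neqE_nat)

lemma Union_blocks_diff:
  assumes "S \<subseteq> I" "T \<subseteq> I"
  shows "\<Union> (X ` S) - \<Union> (X ` T) = \<Union> (X ` (S - T))"
  using assms blocks_disjoint by blast

lemma Union_blocks_subset_iff:
  assumes "S \<subseteq> I" "T \<subseteq> I"
  shows "\<Union> (X ` S) \<subseteq> \<Union> (X ` T) \<longleftrightarrow> S \<subseteq> T"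
proof -
  have "\<Union> (X ` S) \<subseteq> \<Union> (X ` T) \<longleftrightarrow> \<Union> (X ` (S - T)) = {}"
    using Union_blocks_diff[OF assms] by blast
  also have "\<dots> \<longleftrightarrow> S \<subseteq> T"
    using assms block_nonempty by (auto simp: subset_iff)
  finally show ?thesis .
qed

lemma Min_Union_blocks:
  assumes "S \<subseteq> I" "S \<noteq> {}"
  shows "Min (\<Union> (X ` S)) = Min (X (Min S))"
proof (rule Min_eqI)
  have fin: "finite S" using assms(1) finite_index finite_subset by blast
  then have MinS: "Min S \<in> S" using assms(2) by (rule Min_in)
  have MinI: "Min S \<in> I" using MinS assms(1) by blast
  then have "Min (X (Min S)) \<in> X (Min S)"
    by (intro Min_in finite_block block_nonempty)
  then show "Min (X (Min S)) \<in> \<Union> (X ` S)" using MinS by blast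
  show "finite (\<Union> (X ` S))" using fin assms(1) finite_block by auto
  fix p assume "p \<in> \<Union> (X ` S)"
  then obtain \<alpha> where \<alpha>: "\<alpha> \<in> S" "p \<in> X \<alpha>" by blast
  have "Min S \<le> \<alpha>" "\<alpha> \<in> I" using fin \<alpha>(1) assms(1) by auto
  then have "Min (X (Min S)) \<le> Min (X \<alpha>)"
    using MinI Min_block_less[of "Min S" \<alpha>] by (cases "\<alpha> = Min S") auto
  also have "\<dots> \<le> p" using \<alpha> assms(1) finite_block by auto
  finally show "Min (X (Min S)) \<le> p" .
qed

lemma colex_bar_less_Union_blocks_iff:
  assumes "S \<subseteq> I" "T \<subseteq> I"
  shows "colex_bar_less (\<Union> (X ` S)) (\<Union> (X ` T)) \<longleftrightarrow> colex_bar_less S T"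
proof (cases "S \<subseteq> T \<or> T \<subseteq> S")
  case True
  then show ?thesis
    using Union_blocks_subset_iff[OF assms] Union_blocks_subset_iff[OF assms(2,1)]
    unfolding colex_bar_less_def by auto
next
  case False
  then have ne: "S - T \<noteq> {}" "T - S \<noteq> {}" by auto
  have sub: "S - T \<subseteq> I" "T - S \<subseteq> I" using assms by blast+
  have "Min (\<Union> (X ` S) - \<Union> (X ` T)) = Min (X (Min (S - T)))"
    unfolding Union_blocks_diff[OF assms] using Min_Union_blocks[OF sub(1) ne(1)] .
  moreover have "Min (\<Union> (X ` T) - \<Union> (X ` S)) = Min (X (Min (T - S)))"
    unfolding Union_blocks_diff[OF assms(2,1)] using Min_Union_blocks[OF sub(2) ne(2)] .
  ultimately have "Min (\<Union> (X ` S) - \<Union> (X ` T)) < Min (\<Union> (X ` T) - \<Union> (X ` S))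
      \<longleftrightarrow> Min (X (Min (S - T))) < Min (X (Min (T - S)))"
    by simp
  also have "\<dots> \<longleftrightarrow> Min (S - T) < Min (T - S)"
  proof (rule Min_block_less_iff)
    show "Min (S - T) \<in> I" "Min (T - S) \<in> I"
      using sub ne finite_index by (meson Min_in finite_subset subsetD)+
  qed
  finally show ?thesis
    using False Union_blocks_subset_iff[OF assms] Union_blocks_subset_iff[OF assms(2,1)]
    unfolding colex_bar_less_def by auto
qed

end

lemma param_words_ordered_blocks:
  assumes "u \<in> param_words A n m"
  shows "ordered_blocks {1..m} (var_positions u)"
proof -
  have len: "length u = n" using assms by (simp add: param_words_def)
  have X: "var_positions u \<alpha> = {i\<in>{1..n}. u ! (i - 1) = Var \<alpha>}" for \<alpha>
    by (simp add: var_positions_def len)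
  have "var_positions u \<alpha> \<noteq> {}" if "\<alpha> \<in> {1..m}" for \<alpha>
    using assms that unfolding param_words_def X by blast
  then show ?thesis
    using assms unfolding ordered_blocks_def param_words_def by (auto simp: X)
qed

locale alex_downset_enumeration =
  fixes k :: nat and le :: "nat \<Rightarrow> nat \<Rightarrow> bool" and m :: nat and D :: "nat \<Rightarrow> nat set"
  assumes poset: "poset_on {1..k} le"
    and linext: "\<forall>i\<in>{1..k}. \<forall>j\<in>{1..k}. le i j \<longrightarrow> i \<le> j"
    and enum: "bij_betw D {1..m} {B. downset {1..k} le B \<and> B \<noteq> {}}"
    and sorted: "\<forall>\<alpha>\<in>{1..m}. \<forall>\<beta>\<in>{1..m}. \<alpha> < \<beta> \<longrightarrow> alex_less (D \<alpha>) (D \<beta>)"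
begin

definition occ :: "nat \<Rightarrow> nat set" where
  "occ i = {\<alpha>\<in>{1..m}. i \<in> D \<alpha>}"

definition down :: "nat \<Rightarrow> nat set" where
  "down i = {y\<in>{1..k}. le y i}"

lemma poset_refl: "x \<in> {1..k} \<Longrightarrow> le x x"
  and poset_antisym: "x \<in> {1..k} \<Longrightarrow> y \<in> {1..k} \<Longrightarrow> le x y \<Longrightarrow> le y x \<Longrightarrow> x = y"
  and poset_trans: "x \<in> {1..k} \<Longrightarrow> y \<in> {1..k} \<Longrightarrow> z \<in> {1..k} \<Longrightarrow> le x y \<Longrightarrow> le y z \<Longrightarrow> le x z"
  using poset unfolding poset_on_def by blast+

lemma not_le_if_less:
  assumes "i \<in> {1..k}" "j \<in> {1..k}" "i < j"
  shows "\<not> le j i"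
  using assms linext by (meson leD)

lemma occ_subset: "occ i \<subseteq> {1..m}"
  unfolding occ_def by auto

lemma downset_D: "\<alpha> \<in> {1..m} \<Longrightarrow> downset {1..k} le (D \<alpha>)"
  using enum unfolding bij_betw_def by blast

lemma downset_enumerated:
  assumes "downset {1..k} le B" "B \<noteq> {}"
  obtains \<alpha> where "\<alpha> \<in> {1..m}" "D \<alpha> = B"
  using enum assms unfolding bij_betw_def by (metis (mono_tags, lifting) imageE mem_Collect_eq)

lemma downset_down: "i \<in> {1..k} \<Longrightarrow> downset {1..k} le (down i)"
  unfolding downset_def down_def using poset_trans by blast

lemma mem_down_self: "i \<in> {1..k} \<Longrightarrow> i \<in> down i"
  unfolding down_def using poset_refl by auto

lemma occ_subset_occ_iff:
  assumes "i \<in> {1..k}" "j \<in> {1..k}"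
  shows "occ j \<subseteq> occ i \<longleftrightarrow> le i j"
proof
  assume "occ j \<subseteq> occ i"
  obtain \<alpha> where \<alpha>: "\<alpha> \<in> {1..m}" "D \<alpha> = down j"
    using downset_enumerated downset_down mem_down_self assms(2) by blast
  then have "\<alpha> \<in> occ i"
    using \<open>occ j \<subseteq> occ i\<close> mem_down_self assms(2) unfolding occ_def by auto
  then show "le i j" using \<alpha>(2) unfolding occ_def down_def by auto
next
  assume "le i j"
  then show "occ j \<subseteq> occ i"
    using downset_D assms unfolding occ_def downset_def by blast
qed

lemma index_less_if_alex_less:
  assumes "\<alpha> \<in> {1..m}" "\<beta> \<in> {1..m}" "alex_less (D \<alpha>) (D \<beta>)"
  shows "\<alpha> < \<beta>"
  using assms sorted alex_less_irrefl alex_less_asym by (metis linorder_neqE_nat)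

lemma downset_cut:
  assumes "downset {1..k} le B" "i \<in> {1..k}" "j \<in> {1..k}"
  shows "downset {1..k} le ({y\<in>B. \<not> le j y} \<union> down i)"
  using assms poset_trans unfolding downset_def down_def by blast

lemma Min_occ_diff_less:
  assumes ij: "i \<in> {1..k}" "j \<in> {1..k}" "i < j" and not_le: "\<not> le i j"
  shows "Min (occ i - occ j) < Min (occ j - occ i)"
proof -
  have "\<not> le j i" using not_le_if_less[OF ij] .
  then have ne: "occ i - occ j \<noteq> {}" "occ j - occ i \<noteq> {}"
    using occ_subset_occ_iff[OF ij(1,2)] occ_subset_occ_iff[OF ij(2,1)] not_le by auto
  have fin: "finite (occ i - occ j)" "finite (occ j - occ i)"
    by (simp_all add: occ_def)
  define \<beta> where "\<beta> = Min (occ j - occ i)"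
  have \<beta>: "\<beta> \<in> occ j - occ i" using Min_in[OF fin(2) ne(2)] unfolding \<beta>_def .
  define B where "B = D \<beta>"
  define E where "E = {y\<in>B. \<not> le j y} \<union> down i"
  have B: "downset {1..k} le B" "j \<in> B" "i \<notin> B"
    using \<beta> downset_D unfolding B_def occ_def by auto
  have E: "downset {1..k} le E" "i \<in> E" "j \<notin> E"
  proof -
    show "downset {1..k} le E" unfolding E_def using B(1) ij(1,2) by (rule downset_cut)
    show "i \<in> E" unfolding E_def using mem_down_self[OF ij(1)] by blast
    show "j \<notin> E" unfolding E_def down_def using poset_refl[OF ij(2)] \<open>\<not> le j i\<close> by blast
  qed
  obtain \<gamma> where \<gamma>: "\<gamma> \<in> {1..m}" "D \<gamma> = E"
    using downset_enumerated[OF E(1)] E(2) by blast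
  have finBE: "finite B" "finite E"
    using B(1) E(1) unfolding downset_def by (meson finite_atLeastAtMost finite_subset)+
  have "Max (E - B) \<in> down i"
    using Max_in[of "E - B"] finBE E(2) B(3) unfolding E_def by blast
  then have "Max (E - B) \<le> i" using linext ij(1) unfolding down_def by blast
  also have "i < j" by fact
  also have "j \<le> Max (B - E)" using B(2) E(3) finBE by (intro Max_ge) auto
  finally have "alex_less E B"
    using B(2,3) E(2,3) unfolding alex_less_def by blast
  then have "\<gamma> < \<beta>"
    using index_less_if_alex_less[of \<gamma> \<beta>] \<gamma> \<beta> occ_subset unfolding B_def by blast
  moreover have "\<gamma> \<in> occ i - occ j" using \<gamma> E(2,3) unfolding occ_def by simp
  then have "Min (occ i - occ j) \<le> \<gamma>" using fin(1) by simp
  ultimately show ?thesis unfolding \<beta>_def by linarith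
qed

lemma colex_bar_less_occ:
  assumes ij: "i \<in> {1..k}" "j \<in> {1..k}" "i < j"
  shows "colex_bar_less (occ i) (occ j)"
proof (cases "le i j")
  case True
  then have "occ j \<subseteq> occ i" using occ_subset_occ_iff ij by blast
  moreover have "occ i \<noteq> occ j"
  proof
    assume "occ i = occ j"
    then have "le j i" using occ_subset_occ_iff[OF ij(2,1)] by simp
    then show False using poset_antisym[OF ij(1,2) True] ij(3) by simp
  qed
  ultimately show ?thesis unfolding colex_bar_less_def by auto
next
  case False
  have "\<not> le j i" using not_le_if_less[OF ij] .
  then have "\<not> occ i \<subseteq> occ j" "\<not> occ j \<subseteq> occ i"
    using False occ_subset_occ_iff ij(1,2) by blast+
  then show ?thesis
    using Min_occ_diff_less[OF ij False] unfolding colex_bar_less_def by blast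
qed

lemma less_iff_colex_bar_less_occ:
  assumes "i \<in> {1..k}" "j \<in> {1..k}"
  shows "i < j \<longleftrightarrow> colex_bar_less (occ i) (occ j)"
proof
  assume "colex_bar_less (occ i) (occ j)"
  then have "\<not> j < i" "i \<noteq> j"
    using colex_bar_less_occ[OF assms(2,1)] colex_bar_less_asym colex_bar_less_irrefl by blast+
  then show "i < j" by simp
qed (use assms colex_bar_less_occ in blast)

end

theorem mainTheorem4:
  fixes k m n :: nat and le :: "nat \<Rightarrow> nat \<Rightarrow> bool"
    and D :: "nat \<Rightarrow> nat set" and u :: "nat pletter list"
  assumes poset: "poset_on {1..k} le"
    and linext: "\<forall>i\<in>{1..k}. \<forall>j\<in>{1..k}. le i j \<longrightarrow> i \<le> j"
    and enum: "bij_betw D {1..m} {B. downset {1..k} le B \<and> B \<noteq> {}}"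
    and sorted: "\<forall>\<alpha>\<in>{1..m}. \<forall>\<beta>\<in>{1..m}. \<alpha> < \<beta> \<longrightarrow> alex_less (D \<alpha>) (D \<beta>)"
    and nm: "n \<ge> m"
    and u: "u \<in> param_words {0} n m"
  defines "a \<equiv> \<lambda>i. \<Union> {var_positions u \<alpha> | \<alpha>. \<alpha> \<in> {1..m} \<and> i \<in> D \<alpha>}"
  shows "inj_on a {1..k}
    \<and> (\<forall>i\<in>{1..k}. \<forall>j\<in>{1..k}. le i j \<longleftrightarrow> a i \<supseteq> a j)
    \<and> (\<forall>i\<in>{1..k}. \<forall>j\<in>{1..k}. i < j \<longleftrightarrow> colex_bar_less (a i) (a j))"
proof -
  interpret ordered_blocks "{1..m}" "var_positions u"
    using u by (rule param_words_ordered_blocks)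
  interpret alex_downset_enumeration k le m D
    using poset linext enum sorted by unfold_locales
  have a: "a i = \<Union> (var_positions u ` occ i)" for i
    unfolding a_def occ_def by auto
  have order: "\<forall>i\<in>{1..k}. \<forall>j\<in>{1..k}. le i j \<longleftrightarrow> a i \<supseteq> a j"
  proof (intro ballI)
    fix i j assume "i \<in> {1..k}" "j \<in> {1..k}"
    then show "le i j \<longleftrightarrow> a i \<supseteq> a j"
      unfolding a Union_blocks_subset_iff[OF occ_subset occ_subset] by (rule occ_subset_occ_iff[symmetric])
  qed
  moreover have "inj_on a {1..k}"
  proof (rule inj_onI)
    fix i j assume "i \<in> {1..k}" "j \<in> {1..k}" "a i = a j"
    then show "i = j" using order poset_antisym by blast
  qed
  moreover have "\<forall>i\<in>{1..k}. \<forall>j\<in>{1..k}. i < j \<longleftrightarrow> colex_bar_less (a i) (a j)"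
    unfolding a colex_bar_less_Union_blocks_iff[OF occ_subset occ_subset]
    using less_iff_colex_bar_less_occ by blast
  ultimately show ?thesis by blast
qed

end
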